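(* Let $a, b$ be integers with $0 < a \le b$ and let $L_{a,b} = \{C_{i,1} : 1 \le i \le a+1\} \cup \{C_{1,j} : 1 < j \le b+1\}$, of size $n = a+b+1$. Then on the $n \times n$ board, $2 \le \mathrm{cp}_{\mathrm{free}}(L_{a,b}) \le 5$.
   Context: For integers $i,j$, $C_{i,j}$ denotes the unit square cell in column $i$ and row $j$ of the integer grid (columns numbered left to right, rows numbered top to bottom). A polyomino is a finite set of cells; its size is its number of cells. For a polyomino $\mathcal{P}$ of size $n$ the board is $\mathbb{B} = \{C_{i,j} : 1 \le i,j \le n\}$. The shift of $\mathcal{P}$ by integers $(c,d)$ is $\mathcal{P}+(c,d) = \{C_{x+c,y+d} : C_{x,y} \in \mathcal{P}\}$. The rotations of $L_{a,b}$ by $90^\circ, 180^\circ, 270^\circ$ clockwise are $LR_{a,b} = \{C_{i,1} : 1 \le i \le b+1\} \cup \{C_{b+1,j} : 1 \le j \le a+1\}$, $LR^2_{a,b} = \{C_{i,b+1} : 1 \le i \le a+1\} \cup \{C_{a+1,j} : 1 \le j \le b+1\}$, $LR^3_{a,b} = \{C_{i,a+1} : 1 \le i \le b+1\} \cup \{C_{1,j} : 1 \le j \le a+1\}$ (reflections are not allowed). A free copy of $L_{a,b}$ is any shift of one of these four. A set of polyominoes is a valid arrangement if each is contained in $\mathbb{B}$ and they are pairwise disjoint. A free packing of $\mathcal{P}$ is a set of free copies of $\mathcal{P}$ forming a valid arrangement such that adding any further free copy of $\mathcal{P}$ yields an invalid arrangement. The clumsy free packing number $\mathrm{cp}_{\mathrm{free}}(\mathcal{P})$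 is the minimum number of polyominoes in a free packing of $\mathcal{P}$ on the $n \times n$ board. *)

theory Defs
  imports Main
begin

text \<open>A cell C_{i,j} (column i, row j) is the pair (i, j) of integers.\<close>
type_synonym cell = "int \<times> int"

definition shift :: "cell set \<Rightarrow> int \<Rightarrow> int \<Rightarrow> cell set" where
  "shift P c d = (\<lambda>(x, y). (x + c, y + d)) ` P"

definition board :: "nat \<Rightarrow> cell set" where
  "board n = {1..int n} \<times> {1..int n}"

definition L :: "int \<Rightarrow> int \<Rightarrow> cell set" where
  "L a b = {(i, 1) | i. 1 \<le> i \<and> i \<le> a + 1} \<union> {(1, j) | j. 1 < j \<and> j \<le> b + 1}"

definition LR :: "int \<Rightarrow> int \<Rightarrow> cell set" where
  "LR a b = {(i, 1) | i. 1 \<le> i \<and> i \<le> b + 1} \<union> {(b + 1, j) | j. 1 \<le> j \<and> j \<le> a + 1}"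

definition LR2 :: "int \<Rightarrow> int \<Rightarrow> cell set" where
  "LR2 a b = {(i, b + 1) | i. 1 \<le> i \<and> i \<le> a + 1} \<union> {(a + 1, j) | j. 1 \<le> j \<and> j \<le> b + 1}"

definition LR3 :: "int \<Rightarrow> int \<Rightarrow> cell set" where
  "LR3 a b = {(i, a + 1) | i. 1 \<le> i \<and> i \<le> b + 1} \<union> {(1, j) | j. 1 \<le> j \<and> j \<le> a + 1}"

text \<open>Free copies of L_{a,b}: shifts of one of the four rotations.\<close>
definition free_copies_L :: "int \<Rightarrow> int \<Rightarrow> cell set set" where
  "free_copies_L a b = {shift R c d | R c d. R \<in> {L a b, LR a b, LR2 a b, LR3 a b}}"

definition valid_arrangement :: "nat \<Rightarrow> cell set set \<Rightarrow> bool" where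
  "valid_arrangement n S \<longleftrightarrow>
     (\<forall>P\<in>S. P \<subseteq> board n) \<and> (\<forall>P\<in>S. \<forall>Q\<in>S. P \<noteq> Q \<longrightarrow> P \<inter> Q = {})"

definition free_packing :: "cell set set \<Rightarrow> nat \<Rightarrow> cell set set \<Rightarrow> bool" where
  "free_packing F n S \<longleftrightarrow> S \<subseteq> F \<and> valid_arrangement n S \<and>
     (\<forall>Q\<in>F. Q \<notin> S \<longrightarrow> \<not> valid_arrangement n (insert Q S))"

definition cp_free_L :: "int \<Rightarrow> int \<Rightarrow> nat" where
  "cp_free_L a b = (LEAST k. \<exists>S. free_packing (free_copies_L a b) (nat (a + b + 1)) S \<and> card S = k)"

end

theory Submission
  imports Defs
begin

(* Every free copy of L_{a,b} is the union of a horizontal and a vertical segment, so whether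
   two copies meet, or whether a copy lies on the board, is a linear condition on their
   offsets.  The upper bound is witnessed by explicit maximal packings with 2, 3, 4 or 5
   copies, according as b <= a + 1, a + 2 <= b <= 2a + 2, a = 1, or 2a <= b.  For the lower
   bound, a single copy never blocks the board: a copy in orientation L or LR2 misses the
   L-copy in the top left corner or the LR2-copy in the bottom right corner, and likewise
   for LR and LR3 with the other two corners. *)

definition hseg :: "int \<Rightarrow> int \<Rightarrow> int \<Rightarrow> cell set" where
  "hseg y x1 x2 = {(x, y) | x. x1 \<le> x \<and> x \<le> x2}"

definition vseg :: "int \<Rightarrow> int \<Rightarrow> int \<Rightarrow> cell set" where
  "vseg x y1 y2 = {(x, y) | y. y1 \<le> y \<and> y \<le> y2}"

lemma disjnt_hseg_hseg:
  "disjnt (hseg y x1 x2) (hseg y' x1' x2') \<longleftrightarrow> y \<noteq> y' \<or> x2 < x1 \<or> x2' < x1' \<or> x2' < x1 \<or> x2 < x1'"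
proof
  assume "disjnt (hseg y x1 x2) (hseg y' x1' x2')"
  then have "(max x1 x1', y) \<notin> hseg y x1 x2 \<inter> hseg y' x1' x2'"
    by (simp add: disjnt_def)
  then show "y \<noteq> y' \<or> x2 < x1 \<or> x2' < x1' \<or> x2' < x1 \<or> x2 < x1'"
    by (auto simp: hseg_def)
qed (auto simp: disjnt_def hseg_def)

lemma disjnt_vseg_vseg:
  "disjnt (vseg x y1 y2) (vseg x' y1' y2') \<longleftrightarrow> x \<noteq> x' \<or> y2 < y1 \<or> y2' < y1' \<or> y2' < y1 \<or> y2 < y1'"
proof
  assume "disjnt (vseg x y1 y2) (vseg x' y1' y2')"
  then have "(x, max y1 y1') \<notin> vseg x y1 y2 \<inter> vseg x' y1' y2'"
    by (simp add: disjnt_def)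
  then show "x \<noteq> x' \<or> y2 < y1 \<or> y2' < y1' \<or> y2' < y1 \<or> y2 < y1'"
    by (auto simp: vseg_def)
qed (auto simp: disjnt_def vseg_def)

lemma disjnt_hseg_vseg:
  "disjnt (hseg y x1 x2) (vseg x y1 y2) \<longleftrightarrow> \<not> (x1 \<le> x \<and> x \<le> x2 \<and> y1 \<le> y \<and> y \<le> y2)"
  by (auto simp: disjnt_def hseg_def vseg_def)

lemma disjnt_vseg_hseg:
  "disjnt (vseg x y1 y2) (hseg y x1 x2) \<longleftrightarrow> \<not> (x1 \<le> x \<and> x \<le> x2 \<and> y1 \<le> y \<and> y \<le> y2)"
  by (simp add: disjnt_commute disjnt_hseg_vseg)

lemmas disjnt_segments =
  disjnt_Un1 disjnt_Un2 disjnt_hseg_hseg disjnt_vseg_vseg disjnt_hseg_vseg disjnt_vseg_hseg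

lemma hseg_subset_board:
  "x1 \<le> x2 \<Longrightarrow> hseg y x1 x2 \<subseteq> board n \<longleftrightarrow> 1 \<le> y \<and> y \<le> int n \<and> 1 \<le> x1 \<and> x2 \<le> int n"
  by (auto simp: hseg_def board_def)

lemma vseg_subset_board:
  "y1 \<le> y2 \<Longrightarrow> vseg x y1 y2 \<subseteq> board n \<longleftrightarrow> 1 \<le> x \<and> x \<le> int n \<and> 1 \<le> y1 \<and> y2 \<le> int n"
  by (auto simp: vseg_def board_def)

lemma hseg_eq_empty_iff: "hseg y x1 x2 = {} \<longleftrightarrow> x2 < x1"
  by (auto simp: hseg_def)

lemma mem_shift: "p \<in> shift P c d \<longleftrightarrow> (fst p - c, snd p - d) \<in> P"
  unfolding shift_def by (cases p) (force simp: image_iff)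

context
  fixes a b :: int
  assumes nonneg: "0 \<le> a" "0 \<le> b"
begin

lemma shift_L:
  "shift (L a b) c d = hseg (d + 1) (c + 1) (c + a + 1) \<union> vseg (c + 1) (d + 1) (d + b + 1)"
  using nonneg by (auto simp: mem_shift L_def hseg_def vseg_def)

lemma shift_LR:
  "shift (LR a b) c d = hseg (d + 1) (c + 1) (c + b + 1) \<union> vseg (c + b + 1) (d + 1) (d + a + 1)"
  using nonneg by (auto simp: mem_shift LR_def hseg_def vseg_def)

lemma shift_LR2:
  "shift (LR2 a b) c d = hseg (d + b + 1) (c + 1) (c + a + 1) \<union> vseg (c + a + 1) (d + 1) (d + b + 1)"
  using nonneg by (auto simp: mem_shift LR2_def hseg_def vseg_def)

lemma shift_LR3:
  "shift (LR3 a b) c d = hseg (d + a + 1) (c + 1) (c + b + 1) \<union> vseg (c + 1) (d + 1) (d + a + 1)"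
  using nonneg by (auto simp: mem_shift LR3_def hseg_def vseg_def)

lemmas shift_rotations = shift_L shift_LR shift_LR2 shift_LR3

lemma shift_L_subset_board:
  "shift (L a b) c d \<subseteq> board n \<longleftrightarrow> 0 \<le> c \<and> c + a + 1 \<le> int n \<and> 0 \<le> d \<and> d + b + 1 \<le> int n"
  using nonneg by (simp add: shift_L hseg_subset_board vseg_subset_board) arith

lemma shift_LR_subset_board:
  "shift (LR a b) c d \<subseteq> board n \<longleftrightarrow> 0 \<le> c \<and> c + b + 1 \<le> int n \<and> 0 \<le> d \<and> d + a + 1 \<le> int n"
  using nonneg by (simp add: shift_LR hseg_subset_board vseg_subset_board) arith

lemma shift_LR2_subset_board:
  "shift (LR2 a b) c d \<subseteq> board n \<longleftrightarrow> 0 \<le> c \<and> c + a + 1 \<le> int n \<and> 0 \<le> d \<and> d + b + 1 \<le> int n"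
  using nonneg by (simp add: shift_LR2 hseg_subset_board vseg_subset_board) arith

lemma shift_LR3_subset_board:
  "shift (LR3 a b) c d \<subseteq> board n \<longleftrightarrow> 0 \<le> c \<and> c + b + 1 \<le> int n \<and> 0 \<le> d \<and> d + a + 1 \<le> int n"
  using nonneg by (simp add: shift_LR3 hseg_subset_board vseg_subset_board) arith

lemmas shift_subset_board =
  shift_L_subset_board shift_LR_subset_board shift_LR2_subset_board shift_LR3_subset_board

end

lemma shift_mem_free_copies_L:
  "R \<in> {L a b, LR a b, LR2 a b, LR3 a b} \<Longrightarrow> shift R c d \<in> free_copies_L a b"
  unfolding free_copies_L_def by blast

lemma free_copy_on_board_cases [consumes 4, case_names L LR LR2 LR3]:
  fixes a b :: int
  assumes "Q \<in> free_copies_L a b" "Q \<subseteq> board n" "0 \<le> a" "0 \<le> b"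
  obtains c d where "Q = shift (L a b) c d" "0 \<le> c" "c + a + 1 \<le> int n" "0 \<le> d" "d + b + 1 \<le> int n"
  | c d where "Q = shift (LR a b) c d" "0 \<le> c" "c + b + 1 \<le> int n" "0 \<le> d" "d + a + 1 \<le> int n"
  | c d where "Q = shift (LR2 a b) c d" "0 \<le> c" "c + a + 1 \<le> int n" "0 \<le> d" "d + b + 1 \<le> int n"
  | c d where "Q = shift (LR3 a b) c d" "0 \<le> c" "c + b + 1 \<le> int n" "0 \<le> d" "d + a + 1 \<le> int n"
  using assms unfolding free_copies_L_def by (auto simp: shift_subset_board[OF assms(3,4)])

lemma valid_arrangement_iff:
  "valid_arrangement n S \<longleftrightarrow> (\<forall>P\<in>S. P \<subseteq> board n) \<and> pairwise disjnt S"
  by (auto simp: valid_arrangement_def pairwise_def disjnt_def)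

lemma free_packingI:
  assumes "S \<subseteq> F" "\<forall>P\<in>S. P \<subseteq> board n" "pairwise disjnt S"
    and blocking: "\<And>Q. Q \<in> F \<Longrightarrow> Q \<subseteq> board n \<Longrightarrow> \<exists>P\<in>S. \<not> disjnt P Q"
  shows "free_packing F n S"
  unfolding free_packing_def
proof (intro conjI ballI impI)
  fix Q assume "Q \<in> F" "Q \<notin> S"
  show "\<not> valid_arrangement n (insert Q S)"
  proof
    assume valid: "valid_arrangement n (insert Q S)"
    then have "Q \<subseteq> board n" by (simp add: valid_arrangement_iff)
    with blocking \<open>Q \<in> F\<close> obtain P where "P \<in> S" "\<not> disjnt P Q" by blast
    with valid \<open>Q \<notin> S\<close> show False
      by (auto simp: valid_arrangement_iff pairwise_insert)
  qed
qed (use assms in \<open>auto simp: valid_arrangement_iff\<close>)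

lemma finite_valid_arrangement: "valid_arrangement n S \<Longrightarrow> finite S"
  by (rule finite_subset[of S "Pow (board n)"]) (auto simp: valid_arrangement_def board_def)

lemma free_packing_card_ge_2:
  assumes packing: "free_packing F n S"
    and "Q0 \<in> F" "Q0 \<subseteq> board n" "{} \<notin> F"
    and disjnt_copy: "\<And>P. P \<in> F \<Longrightarrow> P \<subseteq> board n \<Longrightarrow> \<exists>Q\<in>F. Q \<subseteq> board n \<and> disjnt P Q"
  shows "2 \<le> card S"
proof (rule ccontr)
  have "S \<subseteq> F" and valid: "valid_arrangement n S"
    and maximal: "\<And>Q. Q \<in> F \<Longrightarrow> Q \<notin> S \<Longrightarrow> \<not> valid_arrangement n (insert Q S)"
    using packing by (auto simp: free_packing_def)
  assume "\<not> 2 \<le> card S"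
  with finite_valid_arrangement[OF valid] consider "S = {}" | P where "S = {P}"
    by (metis One_nat_def card_0_eq card_1_singletonE less_2_cases not_le)
  then obtain Q where "Q \<in> F" "Q \<notin> S" "valid_arrangement n (insert Q S)"
  proof cases
    case 1
    with \<open>Q0 \<in> F\<close> \<open>Q0 \<subseteq> board n\<close> show ?thesis
      by (intro that[of Q0]) (simp_all add: valid_arrangement_iff)
  next
    case (2 P)
    with \<open>S \<subseteq> F\<close> valid have "P \<in> F" "P \<subseteq> board n" by (simp_all add: valid_arrangement_iff)
    with disjnt_copy obtain Q where "Q \<in> F" "Q \<subseteq> board n" "disjnt P Q" by blast
    moreover have "Q \<noteq> P" using \<open>disjnt P Q\<close> \<open>P \<in> F\<close> \<open>{} \<notin> F\<close> by auto
    ultimately show ?thesis using \<open>P \<subseteq> board n\<close> 2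
      by (intro that[of Q]) (auto simp: valid_arrangement_iff pairwise_insert disjnt_sym)
  qed
  with maximal show False by blast
qed

lemma free_copies_L_nonempty:
  fixes a b :: int
  assumes "0 \<le> a" "0 \<le> b"
  shows "{} \<notin> free_copies_L a b"
  using assms unfolding free_copies_L_def by (auto simp: shift_rotations hseg_eq_empty_iff)

lemma free_copy_L_disjnt_copy:
  fixes a b :: int
  assumes "0 < a" "0 < b" "int n = a + b + 1" "P \<in> free_copies_L a b" "P \<subseteq> board n"
  shows "\<exists>Q\<in>free_copies_L a b. Q \<subseteq> board n \<and> disjnt P Q"
proof -
  have ab: "0 \<le> a" "0 \<le> b" using assms by simp_all
  let ?TL = "shift (L a b) 0 0" and ?BR = "shift (LR2 a b) b a"
    and ?TR = "shift (LR a b) a 0" and ?BL = "shift (LR3 a b) 0 b"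
  have "\<forall>Q\<in>{?TL, ?BR, ?TR, ?BL}. Q \<in> free_copies_L a b \<and> Q \<subseteq> board n"
    using assms by (simp add: shift_mem_free_copies_L shift_subset_board[OF ab])
  moreover from assms(4,5) ab have "\<exists>Q\<in>{?TL, ?BR, ?TR, ?BL}. disjnt P Q"
  proof (cases rule: free_copy_on_board_cases)
    case L
    then have "disjnt P ?TL \<or> disjnt P ?BR"
      using assms(1-3) by (simp only: shift_rotations[OF ab] disjnt_segments) smt
    then show ?thesis by blast
  next
    case LR
    then have "disjnt P ?TR \<or> disjnt P ?BL"
      using assms(1-3) by (simp only: shift_rotations[OF ab] disjnt_segments) smt
    then show ?thesis by blast
  next
    case LR2
    then have "disjnt P ?TL \<or> disjnt P ?BR"
      using assms(1-3) by (simp only: shift_rotations[OF ab] disjnt_segments) smt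
    then show ?thesis by blast
  next
    case LR3
    then have "disjnt P ?TR \<or> disjnt P ?BL"
      using assms(1-3) by (simp only: shift_rotations[OF ab] disjnt_segments) smt
    then show ?thesis by blast
  qed
  ultimately show ?thesis by blast
qed

lemma free_packing_two_copies:
  fixes a b :: int
  assumes "0 < a" "a \<le> b" "b \<le> a + 1" "int n = a + b + 1"
  shows "free_packing (free_copies_L a b) n {shift (LR3 a b) a 0, shift (LR3 a b) (b - 1) b}"
    (is "free_packing _ _ ?S")
proof (rule free_packingI)
  have ab: "0 \<le> a" "0 \<le> b" using assms by simp_all
  show "?S \<subseteq> free_copies_L a b" by (simp add: shift_mem_free_copies_L)
  show "\<forall>P\<in>?S. P \<subseteq> board n" using assms by (simp add: shift_subset_board[OF ab])
  show "pairwise disjnt ?S" using assms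
    by (simp only: pairwise_def ball_simps(5,7) shift_rotations[OF ab] disjnt_segments) smt
  show "\<exists>P\<in>?S. \<not> disjnt P Q" if "Q \<in> free_copies_L a b" "Q \<subseteq> board n" for Q
    using that ab by (cases rule: free_copy_on_board_cases)
      (insert assms, simp_all only: bex_simps shift_rotations[OF ab] disjnt_segments, smt+)
qed

lemma free_packing_three_copies:
  fixes a b :: int
  assumes "0 < a" "a + 2 \<le> b" "b \<le> 2 * a + 2" "int n = a + b + 1"
  shows "free_packing (free_copies_L a b) n
    {shift (LR2 a b) 0 0, shift (LR2 a b) (a + 1) 0, shift (LR2 a b) (a + 2) a}"
    (is "free_packing _ _ ?S")
proof (rule free_packingI)
  have ab: "0 \<le> a" "0 \<le> b" using assms by simp_all
  show "?S \<subseteq> free_copies_L a b" by (simp add: shift_mem_free_copies_L)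
  show "\<forall>P\<in>?S. P \<subseteq> board n" using assms by (simp add: shift_subset_board[OF ab])
  show "pairwise disjnt ?S" using assms
    by (simp only: pairwise_def ball_simps(5,7) shift_rotations[OF ab] disjnt_segments) smt
  show "\<exists>P\<in>?S. \<not> disjnt P Q" if "Q \<in> free_copies_L a b" "Q \<subseteq> board n" for Q
    using that ab by (cases rule: free_copy_on_board_cases)
      (insert assms, simp_all only: bex_simps shift_rotations[OF ab] disjnt_segments, smt+)
qed

lemma free_packing_four_copies:
  fixes b :: int
  assumes "2 \<le> b" "int n = b + 2"
  shows "free_packing (free_copies_L 1 b) n
    {shift (L 1 b) 0 1, shift (LR 1 b) 0 0, shift (LR2 1 b) b 0, shift (LR3 1 b) 1 b}"
    (is "free_packing _ _ ?S")
proof (rule free_packingI)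
  have ab: "0 \<le> (1::int)" "0 \<le> b" using assms by simp_all
  show "?S \<subseteq> free_copies_L 1 b" by (simp add: shift_mem_free_copies_L)
  show "\<forall>P\<in>?S. P \<subseteq> board n" using assms by (simp add: shift_subset_board[OF ab])
  show "pairwise disjnt ?S" using assms
    by (simp only: pairwise_def ball_simps(5,7) shift_rotations[OF ab] disjnt_segments) smt
  show "\<exists>P\<in>?S. \<not> disjnt P Q" if "Q \<in> free_copies_L 1 b" "Q \<subseteq> board n" for Q
    using that ab by (cases rule: free_copy_on_board_cases)
      (insert assms, simp_all only: bex_simps shift_rotations[OF ab] disjnt_segments, smt+)
qed

lemma free_packing_five_copies:
  fixes a b :: int
  assumes "2 \<le> a" "2 * a \<le> b" "int n = a + b + 1"
  shows "free_packing (free_copies_L a b) n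
    {shift (L a b) (a - 1) a, shift (LR a b) 0 (a - 1), shift (LR a b) (a - 1) (a - 2),
     shift (LR2 a b) b 0, shift (LR3 a b) a (b - 1)}"
    (is "free_packing _ _ ?S")
proof (rule free_packingI)
  have ab: "0 \<le> a" "0 \<le> b" using assms by simp_all
  show "?S \<subseteq> free_copies_L a b" by (simp add: shift_mem_free_copies_L)
  show "\<forall>P\<in>?S. P \<subseteq> board n" using assms by (simp add: shift_subset_board[OF ab])
  show "pairwise disjnt ?S" using assms
    by (simp only: pairwise_def ball_simps(5,7) shift_rotations[OF ab] disjnt_segments) smt
  show "\<exists>P\<in>?S. \<not> disjnt P Q" if "Q \<in> free_copies_L a b" "Q \<subseteq> board n" for Q
    using that ab by (cases rule: free_copy_on_board_cases)
      (insert assms, simp_all only: bex_simps shift_rotations[OF ab] disjnt_segments, smt+)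
qed

lemma exists_free_packing_card_le_5:
  fixes a b :: int
  assumes "0 < a" "a \<le> b" "int n = a + b + 1"
  shows "\<exists>S. free_packing (free_copies_L a b) n S \<and> card S \<le> 5"
proof -
  consider "b \<le> a + 1" | "a + 2 \<le> b" "b \<le> 2 * a + 2" | "a = 1" "2 \<le> b" | "2 \<le> a" "2 * a \<le> b"
    using assms by linarith
  then show ?thesis
  proof cases
    case 1
    show ?thesis
      by (rule exI, rule conjI, rule free_packing_two_copies)
        (use assms 1 in \<open>simp_all add: card_insert_if\<close>)
  next
    case 2
    show ?thesis
      by (rule exI, rule conjI, rule free_packing_three_copies)
        (use assms 2 in \<open>simp_all add: card_insert_if\<close>)
  next
    case 3
    show ?thesis unfolding \<open>a = 1\<close>
      by (rule exI, rule conjI, rule free_packing_four_copies)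
        (use assms 3 in \<open>simp_all add: card_insert_if\<close>)
  next
    case 4
    show ?thesis
      by (rule exI, rule conjI, rule free_packing_five_copies)
        (use assms 4 in \<open>simp_all add: card_insert_if\<close>)
  qed
qed

lemma free_packing_L_card_ge_2:
  fixes a b :: int
  assumes "0 < a" "0 < b" "int n = a + b + 1" "free_packing (free_copies_L a b) n S"
  shows "2 \<le> card S"
proof (rule free_packing_card_ge_2)
  have ab: "0 \<le> a" "0 \<le> b" using assms by simp_all
  show "free_packing (free_copies_L a b) n S" by fact
  show "shift (L a b) 0 0 \<in> free_copies_L a b" by (simp add: shift_mem_free_copies_L)
  show "shift (L a b) 0 0 \<subseteq> board n" using assms by (simp add: shift_subset_board[OF ab])
  show "{} \<notin> free_copies_L a b" using free_copies_L_nonempty[OF ab] .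
qed (use free_copy_L_disjnt_copy[OF assms(1-3)] in blast)

theorem theorem5:
  fixes a b :: int
  assumes "0 < a" and "a \<le> b"
  shows "2 \<le> cp_free_L a b \<and> cp_free_L a b \<le> 5"
proof -
  define n where "n = nat (a + b + 1)"
  have n: "int n = a + b + 1" using assms by (simp add: n_def)
  obtain S where S: "free_packing (free_copies_L a b) n S" "card S \<le> 5"
    using exists_free_packing_card_le_5[OF assms n] by blast
  have "cp_free_L a b \<le> card S"
    unfolding cp_free_L_def n_def[symmetric] by (rule Least_le) (use S in blast)
  moreover have "2 \<le> cp_free_L a b"
    unfolding cp_free_L_def n_def[symmetric]
    by (rule LeastI2_ex) (use S free_packing_L_card_ge_2[of a b n] assms n in auto)
  ultimately show ?thesis using S(2) by linarith
qed

end
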